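(* Let $\sigma$ be the morphism on $\{c_0,c_1,c_2,c_3\}$ given by $\sigma(c_0)=c_0c_1$, $\sigma(c_1)=c_2c_3$, $\sigma(c_2)=c_0c_1c_2$, $\sigma(c_3)=c_3c_2c_3$, and let $x_\sigma=\lim_n\sigma^n(c_0)$ be its fixed point starting with $c_0$. Let $g$ be the morphism on $\{a,b\}$ given by $g(a)=baa$, $g(b)=ba$, with fixed point $x_G=\lim_n g^n(b)$, and let $\delta$ be the morphism $\delta(a)=c_2c_3$, $\delta(b)=c_0c_1$. Then $x_\sigma=\delta(x_G)$. Moreover, for all $n\ge1$, the number $p_\sigma(n)$ of distinct words of length $n$ occurring in $x_\sigma$ equals $n+3$. *)

theory Defs
  imports Main
begin

datatype c4 = C0 | C1 | C2 | C3
datatype ab = A | B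

definition mor :: "('a \<Rightarrow> 'b list) \<Rightarrow> 'a list \<Rightarrow> 'b list" where
  "mor f w = concat (map f w)"

definition converges_to :: "(nat \<Rightarrow> 'a list) \<Rightarrow> (nat \<Rightarrow> 'a) \<Rightarrow> bool" where
  "converges_to w x \<longleftrightarrow> (\<forall>i. \<exists>N. \<forall>n\<ge>N. i < length (w n) \<and> w n ! i = x i)"

definition word_lim :: "(nat \<Rightarrow> 'a list) \<Rightarrow> (nat \<Rightarrow> 'a)" where
  "word_lim w = (THE x. converges_to w x)"

definition fixpt :: "('a \<Rightarrow> 'a list) \<Rightarrow> 'a \<Rightarrow> (nat \<Rightarrow> 'a)" where
  "fixpt f a = word_lim (\<lambda>n. (mor f ^^ n) [a])"

definition mor_inf :: "('a \<Rightarrow> 'b list) \<Rightarrow> (nat \<Rightarrow> 'a) \<Rightarrow> (nat \<Rightarrow> 'b)" where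
  "mor_inf f x = word_lim (\<lambda>n. mor f (map x [0..<n]))"

definition factors :: "(nat \<Rightarrow> 'a) \<Rightarrow> nat \<Rightarrow> 'a list set" where
  "factors x n = {map x [i..<i+n] | i. True}"

definition complexity :: "(nat \<Rightarrow> 'a) \<Rightarrow> nat \<Rightarrow> nat" where
  "complexity x n = card (factors x n)"

fun sigma :: "c4 \<Rightarrow> c4 list" where
  "sigma C0 = [C0, C1]"
| "sigma C1 = [C2, C3]"
| "sigma C2 = [C0, C1, C2]"
| "sigma C3 = [C3, C2, C3]"

fun g :: "ab \<Rightarrow> ab list" where
  "g A = [B, A, A]"
| "g B = [B, A]"

fun delta :: "ab \<Rightarrow> c4 list" where
  "delta A = [C2, C3]"
| "delta B = [C0, C1]"

end

theory Submission
  imports Defs "HOL-Library.Sublist"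
begin

(* Since delta B = sigma C0 and sigma (delta c) = delta (g c) for every letter c, the iterates
   satisfy sigma^(n+1)(C0) = delta(g^n(B)), so the two fixed points correspond under delta.

   The morphism delta is 2-uniform and the four letters of delta A and delta B are distinct.
   Hence a factor of x_sigma of length n is determined by the parity s of its starting position
   and by the factor of x_G of length Suc ((s + n - 1) div 2) under it, which gives
   p_sigma(n) = p_G(Suc ((n - 1) div 2)) + p_G(Suc (n div 2)).

   The fixed point x_G is Sturmian, p_G(m) = m + 1. Its language is closed under g, avoids BB
   and AAA, and a right special factor v B A of length at least 2 desubstitutes to a shorter
   right special factor u with v B A a suffix of A g(u) B A. By induction, the right special
   factors form a chain for the suffix order, so there is exactly one of each length, and on a
   binary alphabet this makes the complexity grow by exactly one at each length. *)

section \<open>Morphisms and limits of finite words\<close>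

lemma mor_Nil [simp]: "mor f [] = []"
  by (simp add: mor_def)

lemma mor_Cons [simp]: "mor f (x # xs) = f x @ mor f xs"
  by (simp add: mor_def)

lemma mor_append [simp]: "mor f (xs @ ys) = mor f xs @ mor f ys"
  by (simp add: mor_def)

lemma mor_mono_prefix: "prefix xs ys \<Longrightarrow> prefix (mor f xs) (mor f ys)"
  by (auto simp: prefix_def)

lemma length_mor_ge:
  assumes "\<And>c. f c \<noteq> []"
  shows "length xs \<le> length (mor f xs)"
proof (induction xs)
  case (Cons x xs)
  then show ?case using assms[of x] by (cases "f x") auto
qed simp

lemma length_mor_uniform:
  assumes "\<And>c. length (f c) = k"
  shows "length (mor f xs) = k * length xs"
  by (induction xs) (simp_all add: assms)

lemma mor_commute:
  assumes "\<And>c. mor f' (h c) = mor h (f c)"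
  shows "(mor f' ^^ n) (mor h w) = mor h ((mor f ^^ n) w)"
proof -
  have "mor f' (mor h w) = mor h (mor f w)" for w
    by (induction w) (simp_all add: assms)
  then show ?thesis
    by (induction n) simp_all
qed

lemma converges_to_unique:
  assumes "converges_to w x" "converges_to w y"
  shows "x = y"
proof
  fix i
  from assms obtain N1 N2 where "\<forall>n\<ge>N1. w n ! i = x i" "\<forall>n\<ge>N2. w n ! i = y i"
    unfolding converges_to_def by blast
  then show "x i = y i" by (metis max.cobounded1 max.cobounded2)
qed

lemma prefix_chain_nth_eq:
  assumes chain: "\<And>n. prefix (w n) (w (Suc n))"
    and "i < length (w m)" "i < length (w n)"
  shows "w m ! i = w n ! i"
proof -
  have "prefix (w m) (w n) \<or> prefix (w n) (w m)"
    using prefix_order.lift_Suc_mono_le[where f = w, OF chain] nat_le_linear by blast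
  then show ?thesis
    using assms(2,3) by (auto simp: prefix_def nth_append)
qed

lemma word_lim_prefix_chain:
  assumes chain: "\<And>n. prefix (w n) (w (Suc n))"
    and unbounded: "\<And>i. \<exists>n. i < length (w n)"
    and "i < length (w n)"
  shows "word_lim w i = w n ! i"
proof -
  define x where "x j = w (SOME n. j < length (w n)) ! j" for j
  have x: "x j = w m ! j" if "j < length (w m)" for j m
  proof -
    have "j < length (w (SOME n. j < length (w n)))"
      using someI_ex[OF unbounded] .
    then show ?thesis
      unfolding x_def using prefix_chain_nth_eq[where w = w, OF chain that] by simp
  qed
  have "converges_to w x"
    unfolding converges_to_def
  proof
    fix j
    obtain N where N: "j < length (w N)" using unbounded by blast
    have "j < length (w m) \<and> w m ! j = x j" if "N \<le> m" for m
    proof -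
      have "prefix (w N) (w m)"
        using prefix_order.lift_Suc_mono_le[where f = w, OF chain that] .
      then have "j < length (w m)" using N prefix_length_le by fastforce
      then show ?thesis using x by simp
    qed
    then show "\<exists>N. \<forall>m\<ge>N. j < length (w m) \<and> w m ! j = x j" by blast
  qed
  then have "word_lim w = x"
    unfolding word_lim_def using converges_to_unique by blast
  then show ?thesis using x assms(3) by simp
qed

definition prolongable :: "('a \<Rightarrow> 'a list) \<Rightarrow> 'a \<Rightarrow> bool" where
  "prolongable f a \<longleftrightarrow> (\<exists>u. u \<noteq> [] \<and> f a = a # u) \<and> (\<forall>c. f c \<noteq> [])"

lemma mor_funpow_nonempty:
  fixes f :: "'a \<Rightarrow> 'a list"
  assumes "\<And>c. f c \<noteq> []" "xs \<noteq> []"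
  shows "(mor f ^^ n) xs \<noteq> []"
proof -
  have "mor f ys \<noteq> []" if "ys \<noteq> []" for ys
    using that assms(1) by (cases ys) auto
  with assms(2) show ?thesis by (induction n) simp_all
qed

lemma mor_funpow_Suc_prolonged:
  assumes "f a = a # u"
  shows "(mor f ^^ Suc n) [a] = (mor f ^^ n) [a] @ (mor f ^^ n) u"
  by (induction n) (simp_all add: assms)

lemma prefix_mor_funpow_Suc:
  "prolongable f a \<Longrightarrow> prefix ((mor f ^^ n) [a]) ((mor f ^^ Suc n) [a])"
  unfolding prolongable_def by (metis mor_funpow_Suc_prolonged prefixI)

lemma less_length_mor_funpow:
  assumes "prolongable f a"
  shows "n < length ((mor f ^^ n) [a])"
proof -
  obtain u where u: "u \<noteq> []" "f a = a # u" and "\<And>c. f c \<noteq> []"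
    using assms unfolding prolongable_def by blast
  then have growth: "0 < length ((mor f ^^ n) u)" for n
    by (simp add: mor_funpow_nonempty)
  show ?thesis
  proof (induction n)
    case (Suc n)
    then show ?case
      using growth[of n] unfolding mor_funpow_Suc_prolonged[of f a u, OF u(2)] length_append
      by linarith
  qed simp
qed

lemma fixpt_nth:
  assumes "prolongable f a" "i < length ((mor f ^^ n) [a])"
  shows "fixpt f a i = (mor f ^^ n) [a] ! i"
  unfolding fixpt_def
proof (rule word_lim_prefix_chain)
  show "\<exists>n. j < length ((mor f ^^ n) [a])" for j
    using less_length_mor_funpow[OF assms(1)] by blast
qed (use assms prefix_mor_funpow_Suc in auto)

lemma map_fixpt_upt:
  assumes "prolongable f a" "k \<le> length ((mor f ^^ n) [a])"
  shows "map (fixpt f a) [0..<k] = take k ((mor f ^^ n) [a])"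
  using assms by (intro nth_equalityI) (simp_all add: fixpt_nth)

lemma mor_inf_nth:
  assumes "\<And>c. h c \<noteq> []" "i < length (mor h (map x [0..<k]))"
  shows "mor_inf h x i = mor h (map x [0..<k]) ! i"
  unfolding mor_inf_def
proof (rule word_lim_prefix_chain)
  show "\<exists>k. i < length (mor h (map x [0..<k]))" for i
    using length_mor_ge[of h "map x [0..<Suc i]", OF assms(1)] by (auto intro: exI[of _ "Suc i"])
qed (simp_all add: mor_mono_prefix assms(2))

lemma mor_inf_uniform_nth:
  assumes uniform: "\<And>c. length (h c) = k" and "j < k"
  shows "mor_inf h x (k * i + j) = h (x i) ! j"
proof -
  let ?p = "map x [0..<Suc i]"
  have "h c \<noteq> []" for c
    using uniform[of c] assms(2) by force
  moreover have "mor h ?p = mor h (map x [0..<i]) @ h (x i)"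
    by simp
  moreover have "length (mor h (map x [0..<i])) = k * i"
    by (simp add: length_mor_uniform[OF uniform])
  ultimately show ?thesis
    using mor_inf_nth[of h "k * i + j" x "Suc i"] uniform[of "x i"] assms(2)
    by (simp add: nth_append del: upt_Suc)
qed

lemma fixpt_conjugate:
  assumes "prolongable f a" "prolongable f' a'" "\<And>c. h c \<noteq> []"
    and "h a = f' a'" "\<And>c. mor f' (h c) = mor h (f c)"
  shows "fixpt f' a' = mor_inf h (fixpt f a)"
proof
  fix i
  let ?P = "(mor f ^^ i) [a]"
  have "(mor f' ^^ Suc i) [a'] = mor h ?P"
    using mor_commute[of f' h f i "[a]", OF assms(5)] assms(4)
    by (simp add: funpow_Suc_right del: funpow.simps)
  moreover have "map (fixpt f a) [0..<length ?P] = ?P"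
    using map_fixpt_upt[OF assms(1), of "length ?P" i] by simp
  moreover have "i < length (mor h ?P)"
    using less_length_mor_funpow[OF assms(1), of i] length_mor_ge[of h ?P, OF assms(3)]
    by linarith
  ultimately show "fixpt f' a' i = mor_inf h (fixpt f a) i"
    using fixpt_nth[OF assms(2)] mor_inf_nth[of h, OF assms(3)] by metis
qed

section \<open>Factors of fixed points\<close>

definition fixpt_lang :: "('a \<Rightarrow> 'a list) \<Rightarrow> 'a \<Rightarrow> 'a list set" where
  "fixpt_lang f a = {w. \<exists>n. sublist w ((mor f ^^ n) [a])}"

lemma fixpt_lang_sublist: "w \<in> fixpt_lang f a \<Longrightarrow> sublist v w \<Longrightarrow> v \<in> fixpt_lang f a"
  unfolding fixpt_lang_def using sublist_order.order.trans by blast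

lemma fixpt_lang_mor:
  assumes "w \<in> fixpt_lang f a"
  shows "mor f w \<in> fixpt_lang f a"
proof -
  obtain n p s where "(mor f ^^ n) [a] = p @ w @ s"
    using assms unfolding fixpt_lang_def sublist_def by blast
  then have "(mor f ^^ Suc n) [a] = mor f p @ mor f w @ mor f s"
    by simp
  then show ?thesis
    unfolding fixpt_lang_def sublist_def by blast
qed

lemma fixpt_lang_extend:
  assumes "prolongable f a" "w \<in> fixpt_lang f a"
  shows "\<exists>c. w @ [c] \<in> fixpt_lang f a"
proof -
  obtain n p s where ps: "(mor f ^^ n) [a] = p @ w @ s"
    using assms(2) unfolding fixpt_lang_def sublist_def by blast
  obtain u where u: "u \<noteq> []" "f a = a # u" and "\<And>c. f c \<noteq> []"
    using assms(1) unfolding prolongable_def by blast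
  then have "s @ (mor f ^^ n) u \<noteq> []"
    by (simp add: mor_funpow_nonempty)
  then obtain c r where "s @ (mor f ^^ n) u = c # r"
    by (meson neq_Nil_conv)
  then have "(mor f ^^ Suc n) [a] = p @ (w @ [c]) @ r"
    using mor_funpow_Suc_prolonged[of f a u n, OF u(2)] ps by simp
  then show ?thesis
    unfolding fixpt_lang_def sublist_def by blast
qed

lemma factors_fixpt:
  assumes "prolongable f a"
  shows "factors (fixpt f a) k = {w \<in> fixpt_lang f a. length w = k}"
proof (intro equalityI subsetI)
  fix w assume "w \<in> factors (fixpt f a) k"
  then obtain i where w: "w = map (fixpt f a) [i..<i + k]"
    unfolding factors_def by blast
  let ?P = "(mor f ^^ (i + k)) [a]"
  have len: "i + k \<le> length ?P"
    using less_length_mor_funpow[OF assms, of "i + k"] by simp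
  have "w = take k (drop i ?P)"
    unfolding w using len by (intro nth_equalityI) (simp_all add: fixpt_nth[OF assms])
  then have "sublist w ?P"
    by (metis append_take_drop_id sublist_appendI)
  then show "w \<in> {w \<in> fixpt_lang f a. length w = k}"
    unfolding fixpt_lang_def using w by auto
next
  fix w assume "w \<in> {w \<in> fixpt_lang f a. length w = k}"
  then obtain n p s where ps: "(mor f ^^ n) [a] = p @ w @ s" and k: "length w = k"
    unfolding fixpt_lang_def sublist_def by blast
  have "map (fixpt f a) [length p..<length p + k] = w"
  proof (rule nth_equalityI)
    fix j assume "j < length (map (fixpt f a) [length p..<length p + k])"
    then have "j < k"
      using k by simp
    moreover have "fixpt f a (length p + j) = (mor f ^^ n) [a] ! (length p + j)"
      using ps k \<open>j < k\<close> by (intro fixpt_nth[OF assms]) simp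
    ultimately show "map (fixpt f a) [length p..<length p + k] ! j = w ! j"
      using ps k by (simp add: nth_append)
  qed (simp add: k)
  then show "w \<in> factors (fixpt f a) k"
    unfolding factors_def by blast
qed

lemma UNIV_ab: "(UNIV :: ab set) = {A, B}"
  using ab.exhaust by auto

lemma finite_ab_lists_length: "finite {w :: ab list. length w = m}"
proof -
  have "finite (UNIV :: ab set)"
    by (simp add: UNIV_ab)
  from finite_lists_length_eq[OF this, of m] show ?thesis
    by simp
qed

definition right_special :: "ab list set \<Rightarrow> ab list \<Rightarrow> bool" where
  "right_special L w \<longleftrightarrow> w @ [A] \<in> L \<and> w @ [B] \<in> L"

lemma card_words_Suc:
  fixes L :: "ab list set"
  assumes prefix_closed: "\<And>w c. w @ [c] \<in> L \<Longrightarrow> w \<in> L"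
    and extendable: "\<And>w. w \<in> L \<Longrightarrow> \<exists>c. w @ [c] \<in> L"
    and unique_special: "{w. length w = m \<and> right_special L w} = {r}"
  shows "card {w \<in> L. length w = Suc m} = Suc (card {w \<in> L. length w = m})"
proof -
  define X where "X c = {w \<in> L. length w = m \<and> w @ [c] \<in> L}" for c
  have finite: "finite (X c)" for c
    using finite_ab_lists_length[of m] unfolding X_def by (rule rev_finite_subset) auto
  have "{w \<in> L. length w = Suc m} = (\<lambda>w. w @ [A]) ` X A \<union> (\<lambda>w. w @ [B]) ` X B"
  proof (intro equalityI subsetI)
    fix v assume "v \<in> {w \<in> L. length w = Suc m}"
    then obtain w c where "v = w @ [c]" "length w = m" "w @ [c] \<in> L"
      by (auto simp: length_Suc_conv_rev)
    then show "v \<in> (\<lambda>w. w @ [A]) ` X A \<union> (\<lambda>w. w @ [B]) ` X B"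
      unfolding X_def using prefix_closed by (cases c) auto
  qed (auto simp: X_def)
  moreover have "(\<lambda>w. w @ [A]) ` X A \<inter> (\<lambda>w. w @ [B]) ` X B = {}"
    by auto
  moreover have "card ((\<lambda>w. w @ [c]) ` X c) = card (X c)" for c
    by (rule card_image) (simp add: inj_on_def)
  ultimately have "card {w \<in> L. length w = Suc m} = card (X A) + card (X B)"
    using finite card_Un_disjoint[of "(\<lambda>w. w @ [A]) ` X A" "(\<lambda>w. w @ [B]) ` X B"] by simp
  also have "\<dots> = card (X A \<union> X B) + card (X A \<inter> X B)"
    using card_Un_Int[OF finite finite] .
  also have "X A \<union> X B = {w \<in> L. length w = m}"
  proof (intro equalityI subsetI)
    fix w assume w: "w \<in> {w \<in> L. length w = m}"
    then obtain c where "w @ [c] \<in> L"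
      using extendable by blast
    with w show "w \<in> X A \<union> X B"
      unfolding X_def by (cases c) auto
  qed (auto simp: X_def)
  also have "X A \<inter> X B = {w. length w = m \<and> right_special L w}"
    unfolding X_def right_special_def using prefix_closed by blast
  also have "\<dots> = {r}"
    by (rule unique_special)
  finally show ?thesis
    by simp
qed

section \<open>The fixed point of g is Sturmian\<close>

abbreviation lang_g :: "ab list set" where
  "lang_g \<equiv> fixpt_lang g B"

lemma g_nonempty: "g c \<noteq> []"
  by (cases c) simp_all

lemma prolongable_g: "prolongable g B"
  unfolding prolongable_def using g_nonempty by simp

lemma hd_mor_g: "mor g U = c # w \<Longrightarrow> c = B"
  by (cases U; cases "hd U") auto

lemma mor_g_avoids: "\<not> sublist [B, B] (mor g U) \<and> \<not> sublist [A, A, A] (mor g U)"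
proof (induction U)
  case (Cons x U)
  then show ?case
    by (cases x; cases "mor g U") (auto simp: sublist_Cons_right prefix_def dest: hd_mor_g)
qed simp

lemma lang_g_avoids: "[B, B] \<notin> lang_g" "[A, A, A] \<notin> lang_g"
proof -
  have "\<not> sublist [B, B] ((mor g ^^ n) [B]) \<and> \<not> sublist [A, A, A] ((mor g ^^ n) [B])" for n
  proof (cases n)
    case (Suc m)
    then show ?thesis using mor_g_avoids[of "(mor g ^^ m) [B]"] by simp
  qed (auto simp: sublist_Cons_right)
  then show "[B, B] \<notin> lang_g" "[A, A, A] \<notin> lang_g"
    unfolding fixpt_lang_def by blast+
qed

lemma mor_g_split_at_B:
  "mor g U = x @ B # y \<Longrightarrow> \<exists>U1 c U2. U = U1 @ c # U2 \<and> x = mor g U1 \<and> B # y = g c @ mor g U2"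
proof (induction U arbitrary: x)
  case (Cons c U)
  show ?case
  proof (cases x)
    case Nil
    then show ?thesis using Cons.prems by (intro exI[of _ "[]"]) auto
  next
    case (Cons z x')
    then obtain x'' where x'': "x = g c @ x''" "mor g U = x'' @ B # y"
      using Cons.prems by (cases c) (auto simp: Cons_eq_append_conv)
    then obtain U1 c' U2 where "U = U1 @ c' # U2" "x'' = mor g U1" "B # y = g c' @ mor g U2"
      using Cons.IH by blast
    with x'' show ?thesis
      by (intro exI[of _ "c # U1"] exI[of _ c'] exI[of _ U2]) simp
  qed
qed simp

lemma lang_g_desubstitute:
  assumes "v @ [B, A, c] \<in> lang_g"
  shows "\<exists>U. U @ [c] \<in> lang_g \<and> suffix v (mor g U)"
proof -
  obtain n p s where ps: "(mor g ^^ n) [B] = p @ (v @ [B, A, c]) @ s"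
    using assms unfolding fixpt_lang_def sublist_def by blast
  have "mor g ((mor g ^^ n) [B]) = (mor g ^^ Suc n) [B]"
    by simp
  also have "\<dots> = (mor g ^^ n) [B] @ (mor g ^^ n) [A]"
    by (rule mor_funpow_Suc_prolonged) simp
  also have "\<dots> = (p @ v) @ B # (A # c # s @ (mor g ^^ n) [A])"
    using ps by simp
  finally obtain U1 c' U2 where U: "(mor g ^^ n) [B] = U1 @ c' # U2" "p @ v = mor g U1"
    "B # A # c # s @ (mor g ^^ n) [A] = g c' @ mor g U2"
    using mor_g_split_at_B by blast
  (* The block g c' starting at the B of B A c is B A A, or B A followed by a block starting with B. *)
  have "c' = c"
  proof (cases c')
    case A
    then show ?thesis using U(3) by simp
  next
    case B
    then have "mor g U2 = c # s @ (mor g ^^ n) [A]"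
      using U(3) by simp
    then show ?thesis
      using B hd_mor_g by metis
  qed
  then have "(mor g ^^ n) [B] = [] @ (U1 @ [c]) @ U2"
    using U(1) by simp
  then have "U1 @ [c] \<in> lang_g"
    unfolding fixpt_lang_def sublist_def by blast
  moreover have "suffix v (mor g U1)"
    using U(2) unfolding suffix_def by metis
  ultimately show ?thesis by blast
qed

lemma g_snoc_A: "\<exists>q. g c = q @ [A]"
  by (cases c) auto

lemma g_last_two_inj:
  assumes "suffix v (xs @ g x)" "suffix v (ys @ g y)" "2 \<le> length v"
  shows "x = y"
proof -
  obtain d e r where "rev v = d # e # r"
    using assms(3) by (cases "rev v"; cases "tl (rev v)") auto
  with assms(1,2) show ?thesis
    by (cases x; cases y) (auto simp: suffix_to_prefix)
qed

lemma suffix_mor_g_short: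
  assumes "suffix v (mor g U)" "length v \<le> 1"
  shows "suffix v [A]"
proof (cases U rule: rev_exhaust)
  case (snoc U' x)
  obtain q where "g x = q @ [A]"
    using g_snoc_A by blast
  with assms snoc show ?thesis
    by (cases v rule: rev_exhaust) (auto simp: suffix_to_prefix)
qed (use assms in simp)

lemma mor_g_common_suffix:
  "suffix v (mor g U1) \<Longrightarrow> suffix v (mor g U2) \<Longrightarrow>
   \<exists>u. suffix u U1 \<and> suffix u U2 \<and> suffix v (A # mor g u) \<and> length u \<le> length v"
proof (induction U1 arbitrary: U2 v rule: rev_induct)
  case (snoc x U1)
  show ?case
  proof (cases "length v \<le> 1")
    case True
    then have "suffix v [A]"
      using snoc.prems(1) by (rule suffix_mor_g_short[rotated])
    then show ?thesis
      by (intro exI[of _ "[]"]) simp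
  next
    case False
    then obtain U2' y where U2: "U2 = U2' @ [y]"
      using snoc.prems(2) by (cases U2 rule: rev_exhaust) auto
    have v1: "suffix v (mor g U1 @ g x)" and v2: "suffix v (mor g U2' @ g y)"
      using snoc.prems U2 by simp_all
    then have "x = y"
      using False by (intro g_last_two_inj) auto
    have "suffix (g x) (mor g U1 @ g x)"
      by (rule suffixI) (rule refl)
    then consider "suffix (g x) v" | "suffix v (g x)"
      using suffix_same_cases[OF v1] by blast
    then show ?thesis
    proof cases
      case 1
      then obtain v' where v': "v = v' @ g x"
        unfolding suffix_def by blast
      then obtain u where u: "suffix u U1" "suffix u U2'" "suffix v' (A # mor g u)"
        "length u \<le> length v'"
        using snoc.IH[of v' U2'] v1 v2 \<open>x = y\<close> by auto
      have "suffix (v' @ g x) ((A # mor g u) @ g x)"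
        using u(3) by (simp only: same_suffix_suffix)
      moreover have "length u < length v"
        using u(4) v' g_nonempty[of x] by (simp add: less_add_Suc1 order_le_less_trans)
      ultimately show ?thesis
        using u(1,2) v' U2 \<open>x = y\<close> by (intro exI[of _ "u @ [x]"]) simp
    next
      case 2
      with False U2 \<open>x = y\<close> show ?thesis
        by (intro exI[of _ "[x]"]) (simp add: suffix_ConsI)
    qed
  qed
qed (intro exI[of _ "[]"], simp)

lemma right_special_suffix:
  assumes "right_special (fixpt_lang f a) w" "suffix v w"
  shows "right_special (fixpt_lang f a) v"
proof -
  have "v @ [c] \<in> fixpt_lang f a" if "w @ [c] \<in> fixpt_lang f a" for c
    using that by (rule fixpt_lang_sublist) (use assms(2) in \<open>auto simp: suffix_def\<close>)
  with assms(1) show ?thesis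
    unfolding right_special_def by blast
qed

lemma right_special_lang_g_snoc_A:
  assumes "right_special lang_g w" "w \<noteq> []"
  shows "\<exists>v. w = v @ [A]"
proof -
  obtain v c where w: "w = v @ [c]"
    using assms(2) by (cases w rule: rev_exhaust) auto
  have "(v @ [c]) @ [B] \<in> lang_g"
    using assms(1) w unfolding right_special_def by simp
  then have "[c, B] \<in> lang_g"
    by (rule fixpt_lang_sublist) simp
  then have "c = A"
    using lang_g_avoids(1) by (cases c) auto
  with w show ?thesis
    by blast
qed

lemma right_special_lang_g_snoc_BA:
  assumes "right_special lang_g w" "2 \<le> length w"
  shows "\<exists>v. w = v @ [B, A]"
proof -
  obtain w' where "w = w' @ [A]"
    using right_special_lang_g_snoc_A assms by fastforce
  moreover obtain v d where "w' = v @ [d]"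
    using assms(2) \<open>w = w' @ [A]\<close> by (cases w' rule: rev_exhaust) auto
  ultimately have w: "w = v @ [d, A]"
    by simp
  have "(v @ [d, A]) @ [A] \<in> lang_g"
    using assms(1) w unfolding right_special_def by simp
  then have "[d, A, A] \<in> lang_g"
    by (rule fixpt_lang_sublist) simp
  then have "d = B"
    using lang_g_avoids(2) by (cases d) auto
  with w show ?thesis
    by blast
qed

lemma right_special_lang_g_desubstitute:
  assumes "right_special lang_g w" "2 \<le> length w"
  shows "\<exists>u. right_special lang_g u \<and> length u < length w \<and> suffix w (A # mor g u @ [B, A])"
proof -
  obtain v where v: "w = v @ [B, A]"
    using right_special_lang_g_snoc_BA assms by blast
  then have "v @ [B, A, A] \<in> lang_g" "v @ [B, A, B] \<in> lang_g"
    using assms(1) unfolding right_special_def by simp_all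
  then obtain U1 U2 where U: "U1 @ [A] \<in> lang_g" "suffix v (mor g U1)"
    "U2 @ [B] \<in> lang_g" "suffix v (mor g U2)"
    using lang_g_desubstitute by metis
  then obtain u where u: "suffix u U1" "suffix u U2" "suffix v (A # mor g u)" "length u \<le> length v"
    using mor_g_common_suffix by blast
  have "u @ [A] \<in> lang_g"
    using U(1) by (rule fixpt_lang_sublist) (use u(1) in \<open>auto simp: suffix_def\<close>)
  moreover have "u @ [B] \<in> lang_g"
    using U(3) by (rule fixpt_lang_sublist) (use u(2) in \<open>auto simp: suffix_def\<close>)
  moreover have "suffix (v @ [B, A]) ((A # mor g u) @ [B, A])"
    using u(3) by (simp only: same_suffix_suffix)
  ultimately show ?thesis
    using u(4) v unfolding right_special_def by (intro exI[of _ u]) simp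
qed

lemma suffix_Cons_A_mor_g:
  assumes "suffix u1 u2"
  shows "suffix (A # mor g u1 @ t) (A # mor g u2 @ t)"
proof -
  obtain p where p: "u2 = p @ u1"
    using assms unfolding suffix_def by blast
  show ?thesis
  proof (cases p rule: rev_exhaust)
    case (snoc p' x)
    obtain q where "g x = q @ [A]"
      using g_snoc_A by blast
    then have "A # mor g u2 @ t = (A # mor g p' @ q) @ (A # mor g u1 @ t)"
      using p snoc by simp
    then show ?thesis
      by (rule suffixI)
  qed (simp add: p)
qed

lemma right_special_lang_g_short:
  assumes "right_special lang_g w" "right_special lang_g w'" "length w \<le> 1"
  shows "suffix w w' \<or> suffix w' w"
proof (cases "w = [] \<or> w' = []")
  case False
  then have "w = [A]"
    using assms(3) right_special_lang_g_snoc_A[OF assms(1)] by (cases w) auto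
  moreover obtain v where "w' = v @ [A]"
    using False right_special_lang_g_snoc_A[OF assms(2)] by blast
  ultimately show ?thesis
    by simp
qed auto

lemma right_special_lang_g_suffix_linear:
  "right_special lang_g w1 \<Longrightarrow> right_special lang_g w2 \<Longrightarrow> suffix w1 w2 \<or> suffix w2 w1"
proof (induction "length w1 + length w2" arbitrary: w1 w2 rule: less_induct)
  case less
  consider "length w1 \<le> 1" | "length w2 \<le> 1" | "2 \<le> length w1" "2 \<le> length w2"
    by linarith
  then show ?case
  proof cases
    case 1
    then show ?thesis using right_special_lang_g_short less.prems by blast
  next
    case 2
    then show ?thesis using right_special_lang_g_short less.prems by blast
  next
    case 3
    obtain u1 where u1: "right_special lang_g u1" "length u1 < length w1"
      "suffix w1 (A # mor g u1 @ [B, A])"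
      using right_special_lang_g_desubstitute[OF less.prems(1) 3(1)] by blast
    obtain u2 where u2: "right_special lang_g u2" "length u2 < length w2"
      "suffix w2 (A # mor g u2 @ [B, A])"
      using right_special_lang_g_desubstitute[OF less.prems(2) 3(2)] by blast
    have "suffix u1 u2 \<or> suffix u2 u1"
      using less.hyps[of u1 u2] u1 u2 by simp
    then have "suffix w1 (A # mor g u2 @ [B, A]) \<or> suffix w2 (A # mor g u1 @ [B, A])"
      using u1(3) u2(3) suffix_Cons_A_mor_g suffix_order.trans by blast
    then show ?thesis
      using u1(3) u2(3) suffix_same_cases by blast
  qed
qed

lemma right_special_lang_g_grow:
  assumes "right_special lang_g w"
  shows "right_special lang_g (mor g w @ [B, A])"
proof -
  have "w @ [A] \<in> lang_g" "w @ [B] \<in> lang_g"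
    using assms unfolding right_special_def by simp_all
  have "mor g (w @ [A]) \<in> lang_g"
    using \<open>w @ [A] \<in> lang_g\<close> by (rule fixpt_lang_mor)
  then have extA: "(mor g w @ [B, A]) @ [A] \<in> lang_g"
    by simp
  obtain c where "(w @ [B]) @ [c] \<in> lang_g"
    using fixpt_lang_extend[OF prolongable_g \<open>w @ [B] \<in> lang_g\<close>] by blast
  then have "mor g ((w @ [B]) @ [c]) \<in> lang_g"
    by (rule fixpt_lang_mor)
  moreover obtain q where "g c = B # q"
    by (cases c) auto
  ultimately have "((mor g w @ [B, A]) @ [B]) @ q \<in> lang_g"
    by simp
  then have "(mor g w @ [B, A]) @ [B] \<in> lang_g"
    by (rule fixpt_lang_sublist) (rule sublist_append_rightI)
  with extA show ?thesis
    unfolding right_special_def by blast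
qed

lemma right_special_lang_g_exists: "\<exists>w. right_special lang_g w \<and> length w = m"
proof -
  have "\<exists>w. right_special lang_g w \<and> m \<le> length w"
  proof (induction m)
    case 0
    have "sublist [A] ((mor g ^^ 1) [B])" "sublist [B] ((mor g ^^ 1) [B])"
      by (simp_all add: sublist_Cons_right)
    then have "right_special lang_g []"
      unfolding right_special_def fixpt_lang_def by (simp del: funpow.simps) blast
    then show ?case
      by blast
  next
    case (Suc m)
    then obtain w where "right_special lang_g w" "m \<le> length w"
      by blast
    moreover have "length w \<le> length (mor g w)"
      using g_nonempty by (rule length_mor_ge)
    ultimately show ?case
      using right_special_lang_g_grow by (intro exI[of _ "mor g w @ [B, A]"]) simp
  qed
  then obtain w where "right_special lang_g w" "m \<le> length w"
    by blast
  then have "right_special lang_g (drop (length w - m) w)"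
    using right_special_suffix suffix_drop by blast
  with \<open>m \<le> length w\<close> show ?thesis
    by (intro exI[of _ "drop (length w - m) w"]) simp
qed

lemma right_special_lang_g_unique: "\<exists>r. {w. length w = m \<and> right_special lang_g w} = {r}"
proof -
  obtain r where r: "right_special lang_g r" "length r = m"
    using right_special_lang_g_exists by blast
  have "w = r" if "right_special lang_g w" "length w = m" for w
    using right_special_lang_g_suffix_linear[OF that(1) r(1)] that(2) r(2)
    by (auto simp: suffix_order.le_less dest: suffix_length_less)
  with r show ?thesis
    by blast
qed

lemma card_lang_g_words: "card {w \<in> lang_g. length w = m} = Suc m"
proof (induction m)
  case 0
  have "[] \<in> lang_g"
    unfolding fixpt_lang_def by simp
  then have "{w \<in> lang_g. length w = 0} = {[]}"
    by auto
  then show ?case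
    by simp
next
  case (Suc m)
  obtain r where "{w. length w = m \<and> right_special lang_g w} = {r}"
    using right_special_lang_g_unique by blast
  moreover have "w \<in> lang_g" if "w @ [c] \<in> lang_g" for w c
    using that by (rule fixpt_lang_sublist) simp
  ultimately have "card {w \<in> lang_g. length w = Suc m} = Suc (card {w \<in> lang_g. length w = m})"
    using fixpt_lang_extend[OF prolongable_g] by (intro card_words_Suc)
  with Suc.IH show ?case
    by simp
qed

theorem complexity_fixpt_g: "complexity (fixpt g B) m = Suc m"
  unfolding complexity_def factors_fixpt[OF prolongable_g] by (rule card_lang_g_words)

section \<open>Complexity of the image under a uniform morphism\<close>

lemma nth_mor_uniform:
  assumes uniform: "\<And>c. length (h c) = k" and "i < length w" "j < k"
  shows "mor h w ! (k * i + j) = h (w ! i) ! j"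
  using assms(2)
proof (induction w arbitrary: i)
  case (Cons x w)
  then show ?case
    using uniform[of x] assms(3) by (cases i) (simp_all add: nth_append)
qed simp

lemma factor_mor_inf_uniform:
  assumes uniform: "\<And>c. length (h c) = k" and "s < k"
  shows "map (mor_inf h y) [k * i + s..<k * i + s + n] =
         take n (drop s (mor h (map y [i..<i + Suc ((s + n - 1) div k)])))"
proof (rule nth_equalityI)
  let ?w = "map y [i..<i + Suc ((s + n - 1) div k)]"
  have "s + n - 1 < k + k * ((s + n - 1) div k)"
    using assms(2) by (intro dividend_less_times_div) simp
  moreover have "length (mor h ?w) = k + k * ((s + n - 1) div k)"
    by (simp add: length_mor_uniform[OF uniform] del: upt_Suc)
  ultimately have len: "s + n \<le> length (mor h ?w)"
    by linarith
  then show "length (map (mor_inf h y) [k * i + s..<k * i + s + n]) =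
             length (take n (drop s (mor h ?w)))"
    by simp
  fix j assume "j < length (map (mor_inf h y) [k * i + s..<k * i + s + n])"
  then have j: "j < n"
    by simp
  define q r where "q = (s + j) div k" and "r = (s + j) mod k"
  have sj: "s + j = k * q + r" and "r < k"
    using assms(2) by (simp_all add: q_def r_def)
  have "q < Suc ((s + n - 1) div k)"
    unfolding q_def r_def using j by (simp add: less_Suc_eq_le div_le_mono)
  then have "mor h ?w ! (s + j) = h (y (i + q)) ! r"
    unfolding sj using \<open>r < k\<close> by (simp add: nth_mor_uniform[OF uniform] del: upt_Suc)
  moreover have "k * i + s + j = k * (i + q) + r"
    using sj by (simp add: algebra_simps)
  then have "mor_inf h y (k * i + s + j) = h (y (i + q)) ! r"
    using mor_inf_uniform_nth[where h = h, OF uniform \<open>r < k\<close>] by simp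
  ultimately show "map (mor_inf h y) [k * i + s..<k * i + s + n] ! j =
                   take n (drop s (mor h ?w)) ! j"
    using j len by (simp del: upt_Suc)
qed

lemma factors_mor_inf_uniform:
  assumes uniform: "\<And>c. length (h c) = k" and "0 < k"
  shows "factors (mor_inf h y) n =
         (\<Union>s<k. (\<lambda>w. take n (drop s (mor h w))) ` factors y (Suc ((s + n - 1) div k)))"
proof (intro equalityI subsetI)
  fix v assume "v \<in> factors (mor_inf h y) n"
  then obtain p where v: "v = map (mor_inf h y) [p..<p + n]"
    unfolding factors_def by blast
  have "p = k * (p div k) + p mod k" "p mod k < k"
    using assms(2) by simp_all
  then have "v = take n (drop (p mod k)
                  (mor h (map y [p div k..<p div k + Suc ((p mod k + n - 1) div k)])))"
    using factor_mor_inf_uniform[where h = h, OF uniform, of "p mod k" y "p div k" n] v by simp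
  with \<open>p mod k < k\<close>
  show "v \<in> (\<Union>s<k. (\<lambda>w. take n (drop s (mor h w))) ` factors y (Suc ((s + n - 1) div k)))"
    unfolding factors_def by blast
next
  fix v assume "v \<in> (\<Union>s<k. (\<lambda>w. take n (drop s (mor h w))) ` factors y (Suc ((s + n - 1) div k)))"
  then obtain s i where "s < k"
    and v: "v = take n (drop s (mor h (map y [i..<i + Suc ((s + n - 1) div k)])))"
    unfolding factors_def by blast
  then have "v = map (mor_inf h y) [k * i + s..<k * i + s + n]"
    using factor_mor_inf_uniform[where h = h, OF uniform] by simp
  then show "v \<in> factors (mor_inf h y) n"
    unfolding factors_def by blast
qed

lemma length_factors: "w \<in> factors y m \<Longrightarrow> length w = m"
  unfolding factors_def by auto

lemma finite_factors:
  assumes "finite (UNIV :: 'a set)"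
  shows "finite (factors (y :: nat \<Rightarrow> 'a) m)"
proof (rule finite_subset)
  show "factors y m \<subseteq> {w. set w \<subseteq> UNIV \<and> length w = m}"
    using length_factors by blast
qed (rule finite_lists_length_eq[OF assms])

lemma nth_window_mor_uniform:
  assumes uniform: "\<And>c. length (h c) = k"
    and "s + j = k * t + r" "r < k" "t < length w" "j < n"
  shows "take n (drop s (mor h w)) ! j = h (w ! t) ! r"
proof -
  have "k * t + r < k * Suc t"
    using \<open>r < k\<close> by simp
  also have "\<dots> \<le> length (mor h w)"
    using \<open>t < length w\<close> by (simp add: length_mor_uniform[OF uniform] del: mult_Suc_right)
  finally have "k * t + r < length (mor h w)" .
  then show ?thesis
    using assms(2-5) by (simp add: nth_mor_uniform[OF uniform])
qed

text \<open>The block t under a window of length n starting at offset s is entered at position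
  t * k - s of the window (at offset s of the block if t = 0, else at its first letter).\<close>
lemma window_meets_block:
  fixes s n k t :: nat
  assumes "s < k" "0 < n" "t \<le> (s + n - 1) div k"
  obtains j r where "j < n" "r < k" "s + j = k * t + r"
proof
  have "t * k \<le> (s + n - 1) div k * k"
    using assms(3) by (rule mult_le_mono1)
  also have "\<dots> \<le> s + n - 1"
    by simp
  finally show "t * k - s < n"
    using assms(2) by arith
  show "(if t = 0 then s else 0) < k"
    using assms(1) by simp
  show "s + (t * k - s) = k * t + (if t = 0 then s else 0)"
  proof (cases "t = 0")
    case False
    then have "s \<le> t * k"
      using assms(1) by (simp add: less_imp_le_nat order_trans[OF _ mult_le_mono1[of 1 t]])
    with False show ?thesis
      by (simp add: mult.commute)
  qed simp
qed

lemma inj_on_window_mor_uniform: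
  assumes uniform: "\<And>c. length (h c) = k"
    and marked: "inj_on (\<lambda>(c, j). h c ! j) (UNIV \<times> {..<k})"
    and "s < k" "0 < n"
  shows "inj_on (\<lambda>w. take n (drop s (mor h w))) {w. length w = Suc ((s + n - 1) div k)}"
proof (rule inj_onI)
  fix w1 w2
  assume w1: "w1 \<in> {w. length w = Suc ((s + n - 1) div k)}"
    and w2: "w2 \<in> {w. length w = Suc ((s + n - 1) div k)}"
    and eq: "take n (drop s (mor h w1)) = take n (drop s (mor h w2))"
  show "w1 = w2"
  proof (rule nth_equalityI)
    show "length w1 = length w2"
      using w1 w2 by simp
    fix t assume "t < length w1"
    then have "t \<le> (s + n - 1) div k"
      using w1 by simp
    then obtain j r where "j < n" "r < k" "s + j = k * t + r"
      by (rule window_meets_block[OF assms(3,4)])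
    then have "h (w1 ! t) ! r = h (w2 ! t) ! r"
      using eq \<open>t < length w1\<close> w1 w2
        nth_window_mor_uniform[where h = h, OF uniform, of s j t r w1 n]
        nth_window_mor_uniform[where h = h, OF uniform, of s j t r w2 n]
      by simp
    then have "(w1 ! t, r) = (w2 ! t, r)"
      using \<open>r < k\<close> by (intro inj_onD[OF marked]) simp_all
    then show "w1 ! t = w2 ! t"
      by simp
  qed
qed

lemma window_mor_uniform_disjoint:
  assumes uniform: "\<And>c. length (h c) = k"
    and marked: "inj_on (\<lambda>(c, j). h c ! j) (UNIV \<times> {..<k})"
    and "s < k" "s' < k" "s \<noteq> s'" "0 < n"
  shows "(\<lambda>w. take n (drop s (mor h w))) ` {w. w \<noteq> []} \<inter>
         (\<lambda>w. take n (drop s' (mor h w))) ` {w. w \<noteq> []} = {}"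
proof (rule ccontr)
  assume "\<not> ?thesis"
  then obtain w w' where "w \<noteq> []" "w' \<noteq> []"
    and "take n (drop s (mor h w)) = take n (drop s' (mor h w'))"
    by blast
  moreover have "take n (drop s (mor h w)) ! 0 = h (w ! 0) ! s"
    using \<open>w \<noteq> []\<close> assms(3,6) by (intro nth_window_mor_uniform[where h = h, OF uniform]) simp_all
  moreover have "take n (drop s' (mor h w')) ! 0 = h (w' ! 0) ! s'"
    using \<open>w' \<noteq> []\<close> assms(4,6) by (intro nth_window_mor_uniform[where h = h, OF uniform]) simp_all
  ultimately have "h (w ! 0) ! s = h (w' ! 0) ! s'"
    by simp
  then have "(w ! 0, s) = (w' ! 0, s')"
    using assms(3,4) by (intro inj_onD[OF marked]) simp_all
  with assms(5) show False
    by simp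
qed

theorem complexity_mor_inf_uniform:
  fixes h :: "'a \<Rightarrow> 'b list"
  assumes "finite (UNIV :: 'a set)"
    and uniform: "\<And>c. length (h c) = k"
    and marked: "inj_on (\<lambda>(c, j). h c ! j) (UNIV \<times> {..<k})"
    and "0 < k" "0 < n"
  shows "complexity (mor_inf h y) n = (\<Sum>s<k. complexity y (Suc ((s + n - 1) div k)))"
proof -
  define F where "F s = factors y (Suc ((s + n - 1) div k))" for s
  define window where "window s w = take n (drop s (mor h w))" for s w
  have F_lengths: "F s \<subseteq> {w. length w = Suc ((s + n - 1) div k)}" for s
    unfolding F_def using length_factors by blast
  then have "F s \<subseteq> {w. w \<noteq> []}" for s
    by fastforce
  then have disjoint: "window s ` F s \<inter> window s' ` F s' = {}"
    if "s < k" "s' < k" "s \<noteq> s'" for s s'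
    using window_mor_uniform_disjoint[where h = h, OF uniform marked that assms(5)]
    unfolding window_def by blast
  have "inj_on (window s) (F s)" if "s < k" for s
    using inj_on_window_mor_uniform[where h = h, OF uniform marked that assms(5)] F_lengths
    unfolding window_def by (rule inj_on_subset)
  then have card_window: "card (window s ` F s) = card (F s)" if "s < k" for s
    using that by (simp add: card_image)
  have "complexity (mor_inf h y) n = card (\<Union>s<k. window s ` F s)"
    unfolding complexity_def window_def F_def by (simp add: factors_mor_inf_uniform[OF uniform assms(4)])
  also have "\<dots> = (\<Sum>s<k. card (window s ` F s))"
    using finite_factors[OF assms(1)] disjoint unfolding F_def by (intro card_UN_disjoint) auto
  also have "\<dots> = (\<Sum>s<k. complexity y (Suc ((s + n - 1) div k)))"
    using card_window unfolding F_def complexity_def by simp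
  finally show ?thesis .
qed

lemma prolongable_sigma: "prolongable sigma C0"
proof -
  have "sigma c \<noteq> []" for c
    by (cases c) simp_all
  then show ?thesis
    unfolding prolongable_def by simp
qed

lemma delta_marked: "inj_on (\<lambda>(c, j). delta c ! j) (UNIV \<times> {..<2})"
proof (rule inj_onI, clarsimp)
  fix c c' :: ab and j j' :: nat
  assume "j < 2" "j' < 2" "delta c ! j = delta c' ! j'"
  then show "c = c' \<and> j = j'"
    by (cases c; cases c') (auto simp: less_2_cases_iff)
qed

lemma fixpt_sigma_eq: "fixpt sigma C0 = mor_inf delta (fixpt g B)"
proof (rule fixpt_conjugate[OF prolongable_g prolongable_sigma])
  show "delta c \<noteq> []" "mor sigma (delta c) = mor delta (g c)" for c
    by (cases c; simp)+
qed simp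

theorem proposition2:
  shows "fixpt sigma C0 = mor_inf delta (fixpt g B)
         \<and> (\<forall>n\<ge>1. complexity (fixpt sigma C0) n = n + 3)"
proof (intro conjI allI impI)
  show "fixpt sigma C0 = mor_inf delta (fixpt g B)"
    by (rule fixpt_sigma_eq)
  fix n :: nat assume "1 \<le> n"
  have "finite (UNIV :: ab set)"
    by (simp add: UNIV_ab)
  moreover have "length (delta c) = 2" for c
    by (cases c) simp_all
  ultimately have "complexity (fixpt sigma C0) n =
                   (\<Sum>s<2. complexity (fixpt g B) (Suc ((s + n - 1) div 2)))"
    unfolding fixpt_sigma_eq using delta_marked \<open>1 \<le> n\<close> by (intro complexity_mor_inf_uniform) auto
  also have "\<dots> = Suc (Suc ((n - 1) div 2)) + Suc (Suc (n div 2))"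
    using \<open>1 \<le> n\<close> by (simp add: complexity_fixpt_g numeral_2_eq_2)
  also have "\<dots> = n + 3"
    using \<open>1 \<le> n\<close> by presburger
  finally show "complexity (fixpt sigma C0) n = n + 3" .
qed

end
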